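(* Let $G$ be a connected graph of order at least three. Then $\gamma(G)=\gamma_{\rm cer}(G)$ if and only if $G$ has a $\gamma$-set $D$ such that every vertex in $D$ has at least two neighbors in $V_G-D$.
   Context: All graphs are finite and simple; $V_G$ is the vertex set of $G$ and $N_G(v)$ the open neighborhood of $v$. A set $D\subseteq V_G$ is a dominating set of $G$ if every vertex of $V_G-D$ has a neighbor in $D$; $\gamma(G)$ is the minimum cardinality of a dominating set, and a $\gamma$-set is a dominating set of cardinality $\gamma(G)$. A set $D\subseteq V_G$ is a certified dominating set of $G$ if $D$ is a dominating set of $G$ and every vertex of $D$ has either zero or at least two neighbors in $V_G-D$; $\gamma_{\rm cer}(G)$ is the minimum cardinality of a certified dominating set of $G$. *)

theory Defs
  imports Main
begin

definition simple_graph :: "'a set \<Rightarrow> ('a \<Rightarrow> 'a \<Rightarrow> bool) \<Rightarrow> bool" where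
  "simple_graph V E \<longleftrightarrow> finite V \<and> (\<forall>u v. E u v \<longrightarrow> u \<in> V \<and> v \<in> V)
     \<and> (\<forall>u v. E u v \<longrightarrow> E v u) \<and> (\<forall>v. \<not> E v v)"

definition nbhd :: "'a set \<Rightarrow> ('a \<Rightarrow> 'a \<Rightarrow> bool) \<Rightarrow> 'a \<Rightarrow> 'a set" where
  "nbhd V E v = {u \<in> V. E v u}"

definition connected_graph :: "'a set \<Rightarrow> ('a \<Rightarrow> 'a \<Rightarrow> bool) \<Rightarrow> bool" where
  "connected_graph V E \<longleftrightarrow> V \<noteq> {} \<and>
     (\<forall>u \<in> V. \<forall>v \<in> V. (\<lambda>x y. E x y)\<^sup>*\<^sup>* u v)"

definition dominating_set :: "'a set \<Rightarrow> ('a \<Rightarrow> 'a \<Rightarrow> bool) \<Rightarrow> 'a set \<Rightarrow> bool" where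
  "dominating_set V E D \<longleftrightarrow> D \<subseteq> V \<and> (\<forall>v \<in> V - D. \<exists>u \<in> D. E v u)"

definition domination_number :: "'a set \<Rightarrow> ('a \<Rightarrow> 'a \<Rightarrow> bool) \<Rightarrow> nat" where
  "domination_number V E = (LEAST k. \<exists>D. dominating_set V E D \<and> card D = k)"

definition gamma_set :: "'a set \<Rightarrow> ('a \<Rightarrow> 'a \<Rightarrow> bool) \<Rightarrow> 'a set \<Rightarrow> bool" where
  "gamma_set V E D \<longleftrightarrow> dominating_set V E D \<and> card D = domination_number V E"

definition certified_dominating_set :: "'a set \<Rightarrow> ('a \<Rightarrow> 'a \<Rightarrow> bool) \<Rightarrow> 'a set \<Rightarrow> bool" where
  "certified_dominating_set V E D \<longleftrightarrow> dominating_set V E D \<and>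
     (\<forall>v \<in> D. card (nbhd V E v \<inter> (V - D)) = 0 \<or> card (nbhd V E v \<inter> (V - D)) \<ge> 2)"

definition certified_domination_number :: "'a set \<Rightarrow> ('a \<Rightarrow> 'a \<Rightarrow> bool) \<Rightarrow> nat" where
  "certified_domination_number V E = (LEAST k. \<exists>D. certified_dominating_set V E D \<and> card D = k)"

end

theory Submission
  imports Defs
begin

text \<open>Every \<gamma>-set in which each vertex has at least two neighbours outside is certified, so
  \<gamma>_cer \<le> \<gamma>; and \<gamma> \<le> \<gamma>_cer always. Conversely, if \<gamma> = \<gamma>_cer then a minimum certified
  dominating set D is a \<gamma>-set. A vertex v of D without neighbours outside D has, since G is
  connected of order at least three, a neighbour inside D, so D - {v} would still dominate,
  contradicting the minimality of D.\<close>

lemma dominating_set_imp_domination_number_le: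
  "dominating_set V E D \<Longrightarrow> domination_number V E \<le> card D"
  unfolding domination_number_def by (rule Least_le) blast

lemma certified_dominating_set_imp_certified_domination_number_le:
  "certified_dominating_set V E D \<Longrightarrow> certified_domination_number V E \<le> card D"
  unfolding certified_domination_number_def by (rule Least_le) blast

lemma certified_dominating_set_vertex_set:
  "simple_graph V E \<Longrightarrow> certified_dominating_set V E V"
  unfolding certified_dominating_set_def dominating_set_def by auto

lemma ex_minimum_certified_dominating_set:
  assumes "simple_graph V E"
  obtains D where "certified_dominating_set V E D" "card D = certified_domination_number V E"
proof -
  have "\<exists>D. certified_dominating_set V E D \<and> card D = certified_domination_number V E"
    unfolding certified_domination_number_def
    by (rule LeastI_ex) (use certified_dominating_set_vertex_set[OF assms] in blast)
  then show thesis using that by blast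
qed

lemma domination_number_le_certified_domination_number:
  assumes "simple_graph V E"
  shows "domination_number V E \<le> certified_domination_number V E"
proof -
  obtain C where "certified_dominating_set V E C" "card C = certified_domination_number V E"
    using ex_minimum_certified_dominating_set[OF assms] .
  then show ?thesis
    using dominating_set_imp_domination_number_le
    unfolding certified_dominating_set_def by metis
qed

lemma connected_graph_ex_neighbour:
  assumes "connected_graph V E" "card V \<ge> 2" "v \<in> V"
  shows "\<exists>u. E v u"
proof -
  have "\<not> V \<subseteq> {v}"
  proof
    assume "V \<subseteq> {v}"
    then have "card V \<le> card {v}" by (intro card_mono) auto
    then show False using assms(2) by simp
  qed
  then obtain w where w: "w \<in> V" "w \<noteq> v" by blast
  have "E\<^sup>*\<^sup>* v w" using assms(1,3) w unfolding connected_graph_def by blast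
  then show ?thesis using w(2) by (cases rule: converse_rtranclpE) auto
qed

lemma dominating_set_Diff_vertex_without_outer_neighbours:
  assumes G: "simple_graph V E"
    and D: "dominating_set V E D"
    and v: "v \<in> D" "nbhd V E v \<inter> (V - D) = {}"
    and u: "E v u"
  shows "dominating_set V E (D - {v})"
  unfolding dominating_set_def
proof (intro conjI ballI)
  show "D - {v} \<subseteq> V" using D unfolding dominating_set_def by blast
next
  fix x assume x: "x \<in> V - (D - {v})"
  show "\<exists>y \<in> D - {v}. E x y"
  proof (cases "x = v")
    case True
    have "u \<in> V" "u \<noteq> v" using u G unfolding simple_graph_def by blast+
    then have "u \<in> D - {v}" using u v(2) unfolding nbhd_def by blast
    then show ?thesis using True u by blast
  next
    case False
    then have "x \<in> V - D" using x by blast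
    then obtain y where y: "y \<in> D" "E x y" using D unfolding dominating_set_def by blast
    have "\<not> E v x" using v(2) \<open>x \<in> V - D\<close> unfolding nbhd_def by blast
    then have "y \<noteq> v" using y(2) G unfolding simple_graph_def by blast
    then show ?thesis using y by blast
  qed
qed

lemma minimum_dominating_set_two_outer_neighbours:
  assumes G: "simple_graph V E"
    and no_isolated: "\<forall>v \<in> V. \<exists>u. E v u"
    and C: "certified_dominating_set V E D" "card D = domination_number V E"
    and v: "v \<in> D"
  shows "card (nbhd V E v \<inter> (V - D)) \<ge> 2"
proof (rule ccontr)
  assume "\<not> ?thesis"
  then have "card (nbhd V E v \<inter> (V - D)) = 0"
    using C(1) v unfolding certified_dominating_set_def by auto
  moreover have "finite (nbhd V E v \<inter> (V - D))"
    using G unfolding simple_graph_def nbhd_def by auto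
  ultimately have no_outer: "nbhd V E v \<inter> (V - D) = {}" by simp
  have D: "dominating_set V E D" using C(1) unfolding certified_dominating_set_def by blast
  then have "D \<subseteq> V" unfolding dominating_set_def by blast
  then obtain u where "E v u" using no_isolated v by blast
  then have "dominating_set V E (D - {v})"
    using dominating_set_Diff_vertex_without_outer_neighbours[OF G D v no_outer] by blast
  then have "domination_number V E \<le> card (D - {v})"
    by (rule dominating_set_imp_domination_number_le)
  moreover have "finite D" using \<open>D \<subseteq> V\<close> G finite_subset unfolding simple_graph_def by blast
  then have "card (D - {v}) < card D" using v by (rule card_Diff1_less)
  ultimately show False using C(2) by simp
qed

theorem theorem2p1:
  fixes V :: "'a set" and E :: "'a \<Rightarrow> 'a \<Rightarrow> bool"
  assumes "simple_graph V E"
    and "connected_graph V E"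
    and "card V \<ge> 3"
  shows "domination_number V E = certified_domination_number V E \<longleftrightarrow>
    (\<exists>D. gamma_set V E D \<and> (\<forall>v \<in> D. card (nbhd V E v \<inter> (V - D)) \<ge> 2))"
proof
  assume eq: "domination_number V E = certified_domination_number V E"
  obtain D where D: "certified_dominating_set V E D" "card D = domination_number V E"
    using ex_minimum_certified_dominating_set[OF assms(1)] eq by metis
  have "\<forall>v \<in> V. \<exists>u. E v u"
    using connected_graph_ex_neighbour[OF assms(2)] assms(3) by simp
  then have "\<forall>v \<in> D. card (nbhd V E v \<inter> (V - D)) \<ge> 2"
    using minimum_dominating_set_two_outer_neighbours[OF assms(1) _ D] by blast
  moreover have "gamma_set V E D"
    using D unfolding gamma_set_def certified_dominating_set_def by blast
  ultimately show "\<exists>D. gamma_set V E D \<and> (\<forall>v \<in> D. card (nbhd V E v \<inter> (V - D)) \<ge> 2)"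
    by blast
next
  assume "\<exists>D. gamma_set V E D \<and> (\<forall>v \<in> D. card (nbhd V E v \<inter> (V - D)) \<ge> 2)"
  then obtain D where D: "gamma_set V E D" "\<forall>v \<in> D. card (nbhd V E v \<inter> (V - D)) \<ge> 2"
    by blast
  then have "certified_dominating_set V E D"
    unfolding gamma_set_def certified_dominating_set_def by blast
  then have "certified_domination_number V E \<le> domination_number V E"
    using certified_dominating_set_imp_certified_domination_number_le D(1)
    unfolding gamma_set_def by fastforce
  then show "domination_number V E = certified_domination_number V E"
    using domination_number_le_certified_domination_number[OF assms(1)] by simp
qed

end
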